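(* Let $W\ge1$ be an integer and let $\mathcal H$ be a real Hilbert space of dimension $d\in\{1,2,\ldots\}\cup\{\infty\}$ (written $\mathcal H\cong\mathbb R^d$). Let $\Phi:\mathbb R^W\to\mathcal H$ be differentiable with Lipschitz-continuous differential. Suppose a set $G\subset\mathcal H$ is the image of the $W$-dimensional sphere $\mathbb S^W=\{\mathbf y\in\mathbb R^{W+1}:\|\mathbf y\|=1\}$ under a continuous injective map $g:\mathbb S^W\to\mathcal H$. Then $G\not\subset F_\Phi$.
   Context: For a target $\mathbf f\in\mathcal H$, let $L_{\mathbf f}(\mathbf w)=\frac12\|\mathbf f-\Phi(\mathbf w)\|^2_{\mathcal H}$ and let $\mathbf w(t)$, $t\ge0$, be the (unique, globally defined) solution of the gradient flow $\frac{d\mathbf w}{dt}=-\nabla_{\mathbf w}L_{\mathbf f}(\mathbf w(t))$ with $\mathbf w(0)=\mathbf 0$. The set of GF-learnable targets is $F_\Phi=\{\mathbf f\in\mathcal H:\inf_{t\ge0}L_{\mathbf f}(\mathbf w(t))=0\}$. *)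

theory Defs
  imports "HOL-Analysis.Analysis"
begin

definition loss :: "('w \<Rightarrow> 'h::real_normed_vector) \<Rightarrow> 'h \<Rightarrow> 'w \<Rightarrow> real" where
  "loss Phi f w = (1/2) * (norm (f - Phi w))\<^sup>2"

definition is_GF_solution ::
  "('w::euclidean_space \<Rightarrow> 'h::real_normed_vector) \<Rightarrow> 'h \<Rightarrow> (real \<Rightarrow> 'w) \<Rightarrow> bool" where
  "is_GF_solution Phi f w \<longleftrightarrow> w 0 = 0 \<and>
     (\<forall>t\<ge>0. \<exists>gr::'w. (loss Phi f has_derivative (\<lambda>h. gr \<bullet> h)) (at (w t))
                    \<and> (w has_vector_derivative (- gr)) (at t within {0..}))"

definition F_learnable :: "('w::euclidean_space \<Rightarrow> 'h::real_normed_vector) \<Rightarrow> 'h set" where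
  "F_learnable Phi = {f. \<exists>w. is_GF_solution Phi f w \<and> (INF t\<in>{0..}. loss Phi f (w t)) = 0}"

end

theory Submission
  imports Defs
begin

(* If the image of the sphere consisted of GF-learnable targets, two properties of the flow
   would give a single time T at which f |-> w_f(T) is continuous on the image with
   Phi(w_f(T)) uniformly close to f: the residual norm ||f - Phi(w_f(t))|| is nonincreasing
   in t, and by Gronwall's inequality w_f(t) depends Lipschitz-continuously on f for t in a
   bounded interval (this is where the Lipschitz differential enters); compactness then turns
   the pointwise convergence of the residual to 0 into a uniform one, as in Dini's theorem.
   Composing with g and with a continuous extension of the inverse of g yields a map from the
   sphere in R^(W+1) to R^(W+1) that is uniformly close to the identity but factors through
   R^W. After normalisation such a map is homotopic to the identity of the sphere, yet it is
   nullhomotopic, because every map from a compact subset of R^W to the W-sphere extends over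
   a box; this contradicts the non-contractibility of the sphere. *)

lemma nullhomotopic_lowdim_compact_into_sphere:
  fixes f :: "'a::euclidean_space \<Rightarrow> 'b::euclidean_space"
  assumes dim: "DIM('a) < DIM('b)" and "compact C"
    and contf: "continuous_on C f" and fim: "f \<in> C \<rightarrow> sphere 0 1"
  obtains c where "homotopic_with_canon (\<lambda>h. True) C (sphere 0 1) f (\<lambda>x. c)"
proof -
  obtain a where box: "C \<subseteq> cbox (-a) a"
    using bounded_subset_cbox_symmetric \<open>compact C\<close> compact_imp_bounded by blast
  obtain r where contr: "continuous_on (cbox (-a) a) r"
    and rim: "r \<in> cbox (-a) a \<rightarrow> sphere 0 1" and rf: "\<And>x. x \<in> C \<Longrightarrow> r x = f x"
  proof (rule extend_map_cell_complex_to_sphere[of "{cbox (-a) a}" C "cball 0 1" f])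
    show "aff_dim X < aff_dim (cball (0::'b) 1)" if "X \<in> {cbox (-a) a}" for X
      using aff_dim_le_DIM[of X] dim by (simp add: aff_dim_cball)
  qed (use box \<open>compact C\<close> compact_imp_closed contf fim polytope_interval
         face_of_refl[OF convex_box(1)] in auto)
  obtain c where "homotopic_with_canon (\<lambda>h. True) (cbox (-a) a) (sphere 0 1) r (\<lambda>x. c)"
    using nullhomotopic_from_contractible[OF contr rim convex_imp_contractible[OF convex_box(1)]] .
  then have "homotopic_with_canon (\<lambda>h. True) C (sphere 0 1) r (\<lambda>x. c)"
    using homotopic_with_subset_left box by blast
  then show thesis
    by (rule that[OF homotopic_with_eq]) (auto simp: rf)
qed

lemma homotopic_id_normalized_near_id:
  fixes h :: "'a::real_normed_vector \<Rightarrow> 'a"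
  assumes conth: "continuous_on (sphere 0 1) h"
    and near: "\<And>y. y \<in> sphere 0 1 \<Longrightarrow> norm (h y - y) < 1"
  shows "homotopic_with_canon (\<lambda>h. True) (sphere 0 1) (sphere 0 1) id (\<lambda>y. h y /\<^sub>R norm (h y))"
proof -
  have segment: "closed_segment y (h y) \<subseteq> - {0}" if y: "y \<in> sphere 0 1" for y
  proof
    fix z assume "z \<in> closed_segment y (h y)"
    then obtain u where u: "0 \<le> u" "u \<le> 1" "z - y = u *\<^sub>R (h y - y)"
      by (auto simp: closed_segment_def algebra_simps)
    then have "norm (z - y) \<le> norm (h y - y)"
      by (simp add: mult_left_le_one_le)
    with near[OF y] y show "z \<in> - {0}" by auto
  qed
  have "homotopic_with_canon (\<lambda>h. True) (sphere 0 1) (- {0}) id h"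
    by (rule homotopic_with_linear) (use conth segment in auto)
  then have "homotopic_with_canon (\<lambda>h. True) (sphere 0 1) (sphere 0 1)
      ((\<lambda>z. z /\<^sub>R norm z) \<circ> id) ((\<lambda>z. z /\<^sub>R norm z) \<circ> h)"
    by (rule homotopic_with_compose_continuous_left) (auto intro!: continuous_intros)
  then show ?thesis
    by (rule homotopic_with_eq) auto
qed

lemma sphere_not_near_factor_through_lowdim:
  fixes k :: "'b::euclidean_space \<Rightarrow> 'a::euclidean_space" and F :: "'a \<Rightarrow> 'b"
  assumes dim: "DIM('a) < DIM('b)"
    and contk: "continuous_on (sphere 0 1) k" and contF: "continuous_on UNIV F"
    and near: "\<And>y. y \<in> sphere 0 1 \<Longrightarrow> norm (F (k y) - y) < 1"
  shows False
proof -
  define N where "N = (\<lambda>z::'b. z /\<^sub>R norm z)"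
  define C where "C = k ` sphere 0 1"
  have F_nonzero: "F z \<noteq> 0" if "z \<in> C" for z
    using that near by (force simp: C_def)
  have "continuous_on C (N \<circ> F)"
    unfolding N_def o_def using F_nonzero
    by (intro continuous_intros continuous_on_subset[OF contF]) auto
  moreover have "compact C"
    unfolding C_def by (intro compact_continuous_image contk compact_sphere)
  moreover have "N \<circ> F \<in> C \<rightarrow> sphere 0 1"
    using F_nonzero by (auto simp: N_def)
  ultimately obtain c where "homotopic_with_canon (\<lambda>h. True) C (sphere 0 1) (N \<circ> F) (\<lambda>x. c)"
    using nullhomotopic_lowdim_compact_into_sphere[OF dim] by metis
  then have "homotopic_with_canon (\<lambda>h. True) (sphere 0 1) (sphere 0 1) (N \<circ> F \<circ> k) (\<lambda>x. c)"
    using homotopic_with_compose_continuous_right[OF _ contk, of _ C] by (force simp: C_def o_def)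
  moreover have "homotopic_with_canon (\<lambda>h. True) (sphere 0 1) (sphere 0 1) id (N \<circ> F \<circ> k)"
    using homotopic_id_normalized_near_id[of "F \<circ> k"] near
      continuous_on_compose[OF contk continuous_on_subset[OF contF]]
    by (simp add: N_def o_def)
  ultimately have "homotopic_with_canon (\<lambda>h. True) (sphere 0 1) (sphere 0 1) id (\<lambda>x. c)"
    using homotopic_with_trans by blast
  then have "contractible (sphere (0::'b) 1)"
    unfolding contractible_def by blast
  then show False by (simp add: contractible_sphere)
qed

lemma continuous_uniformly_near_compact:
  fixes e :: "'a::metric_space \<Rightarrow> 'c::metric_space"
  assumes "compact K" "continuous_on UNIV e" "\<epsilon> > 0"
  obtains \<delta> where "\<delta> > 0" "\<And>x z. x \<in> K \<Longrightarrow> dist z x < \<delta> \<Longrightarrow> dist (e z) (e x) < \<epsilon>"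
proof -
  define \<G> where "\<G> = (\<lambda>x. e -` ball (e x) (\<epsilon>/2)) ` K"
  have "open G" if "G \<in> \<G>" for G
    using that assms(2) unfolding \<G>_def continuous_on_open_vimage[OF open_UNIV] by auto
  moreover have "K \<subseteq> \<Union>\<G>"
    unfolding \<G>_def using assms(3) by auto
  ultimately obtain \<delta> where \<delta>: "0 < \<delta>" "\<And>x. x \<in> K \<Longrightarrow> \<exists>G \<in> \<G>. ball x \<delta> \<subseteq> G"
    using Heine_Borel_lemma[OF assms(1)] by metis
  have "dist (e z) (e x) < \<epsilon>" if "x \<in> K" "dist z x < \<delta>" for x z
  proof -
    obtain x0 where "ball x \<delta> \<subseteq> e -` ball (e x0) (\<epsilon>/2)"
      using \<delta>(2)[OF \<open>x \<in> K\<close>] unfolding \<G>_def by auto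
    moreover have "z \<in> ball x \<delta>" "x \<in> ball x \<delta>"
      using that \<delta>(1) by (auto simp: dist_commute)
    ultimately have "e z \<in> ball (e x0) (\<epsilon>/2)" "e x \<in> ball (e x0) (\<epsilon>/2)"
      by blast+
    then show ?thesis
      using dist_triangle3[of "e z" "e x" "e x0"] by simp
  qed
  with \<delta>(1) show thesis by (rule that)
qed

lemma continuous_left_inverse_extension:
  fixes g :: "'b::euclidean_space \<Rightarrow> 'h::metric_space"
  assumes "compact S" "continuous_on S g" "inj_on g S"
  obtains e where "continuous_on UNIV e" "\<And>y. y \<in> S \<Longrightarrow> e (g y) = y"
proof -
  define g' where "g' = the_inv_into S g"
  have contg': "continuous_on (g ` S) g'"
    unfolding g'_def by (rule continuous_on_inv_into[OF assms(2,1,3)])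
  have closed: "closed (g ` S)"
    by (intro compact_imp_closed compact_continuous_image assms)
  have "\<exists>E. continuous_on UNIV E \<and> (\<forall>x\<in>g ` S. E x = g' x \<bullet> b)" for b
  proof -
    have "continuous_map (subtopology euclidean (g ` S)) euclideanreal (\<lambda>x. g' x \<bullet> b)"
      using contg' by (auto intro!: continuous_intros)
    then obtain E where "continuous_map euclidean euclideanreal E"
      "\<And>x. x \<in> g ` S \<Longrightarrow> E x = g' x \<bullet> b"
      using Tietze_extension_realinterval[of euclidean "g ` S" UNIV] closed
      by (auto simp: metrizable_imp_normal_space metrizable_space_euclidean)
    then show ?thesis by auto
  qed
  then obtain E where E: "\<And>b. continuous_on UNIV (E b)"
    "\<And>b x. x \<in> g ` S \<Longrightarrow> E b x = g' x \<bullet> b"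
    by metis
  show thesis
  proof
    show "continuous_on UNIV (\<lambda>z. \<Sum>b\<in>Basis. E b z *\<^sub>R b)"
      by (intro continuous_intros E(1))
    show "(\<Sum>b\<in>Basis. E b (g y) *\<^sub>R b) = y" if "y \<in> S" for y
      using that E(2) the_inv_into_f_f[OF assms(3)]
      by (simp add: g'_def euclidean_representation)
  qed
qed

lemma sphere_embedding_not_near_lowdim_factor:
  fixes g :: "'b::euclidean_space \<Rightarrow> 'h::metric_space" and Phi :: "'a::euclidean_space \<Rightarrow> 'h"
  assumes dim: "DIM('a) < DIM('b)"
    and contg: "continuous_on (sphere 0 1) g" and inj: "inj_on g (sphere 0 1)"
    and contPhi: "continuous_on UNIV Phi"
  obtains \<epsilon> where "\<epsilon> > 0"
    "\<And>k. continuous_on (g ` sphere 0 1) k \<Longrightarrow> \<exists>f\<in>g ` sphere 0 1. \<epsilon> \<le> dist (Phi (k f)) f"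
proof -
  obtain e where conte: "continuous_on UNIV e" and eg: "\<And>y. y \<in> sphere 0 1 \<Longrightarrow> e (g y) = y"
    using continuous_left_inverse_extension[OF compact_sphere contg inj] by blast
  obtain \<delta> where "\<delta> > 0"
    and \<delta>: "\<And>f z. f \<in> g ` sphere 0 1 \<Longrightarrow> dist z f < \<delta> \<Longrightarrow> dist (e z) (e f) < 1"
    using continuous_uniformly_near_compact[OF compact_continuous_image[OF contg compact_sphere] conte]
    by (metis zero_less_one)
  show thesis
  proof (rule that[OF \<open>\<delta> > 0\<close>], rule ccontr)
    fix k :: "'h \<Rightarrow> 'a"
    assume contk: "continuous_on (g ` sphere 0 1) k"
      and "\<not> (\<exists>f\<in>g ` sphere 0 1. \<delta> \<le> dist (Phi (k f)) f)"
    then have "dist (Phi (k (g y))) (g y) < \<delta>" if "y \<in> sphere 0 1" for y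
      using that by force
    then have "norm ((e \<circ> Phi) ((k \<circ> g) y) - y) < 1" if "y \<in> sphere 0 1" for y
      using \<delta> eg that by (force simp: dist_norm)
    moreover have "continuous_on (sphere 0 1) (k \<circ> g)"
      by (rule continuous_on_compose[OF contg contk])
    moreover have "continuous_on UNIV (e \<circ> Phi)"
      by (rule continuous_on_compose[OF contPhi continuous_on_subset[OF conte]]) auto
    ultimately show False
      using sphere_not_near_factor_through_lowdim[OF dim] by blast
  qed
qed

lemma DERIV_within_nonpos_imp_nonincreasing:
  fixes \<phi> \<phi>' :: "real \<Rightarrow> real"
  assumes "a \<le> b"
    and deriv: "\<And>x. x \<in> {a..b} \<Longrightarrow> (\<phi> has_real_derivative \<phi>' x) (at x within {a..b})"
    and nonpos: "\<And>x. x \<in> {a..b} \<Longrightarrow> \<phi>' x \<le> 0"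
  shows "\<phi> b \<le> \<phi> a"
proof (rule DERIV_nonpos_imp_decreasing_open[OF \<open>a \<le> b\<close>])
  fix x assume "a < x" "x < b"
  then have "at x within {a..b} = at x"
    by (intro at_within_interior) auto
  then show "\<exists>y. DERIV \<phi> x :> y \<and> y \<le> 0"
    using deriv[of x] nonpos[of x] \<open>a < x\<close> \<open>x < b\<close> by auto
next
  show "continuous_on {a..b} \<phi>"
    using deriv DERIV_continuous continuous_on_eq_continuous_within by blast
qed

lemma Gronwall_inequality:
  fixes z z' :: "real \<Rightarrow> real"
  assumes "a > 0" "0 \<le> t"
    and deriv: "\<And>s. s \<in> {0..t} \<Longrightarrow> (z has_real_derivative z' s) (at s within {0..t})"
    and le: "\<And>s. s \<in> {0..t} \<Longrightarrow> z' s \<le> a * z s + b"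
  shows "z t + b / a \<le> (z 0 + b / a) * exp (a * t)"
proof -
  define \<psi> where "\<psi> = (\<lambda>s. (z s + b / a) * exp (- a * s))"
  have "\<psi> t \<le> \<psi> 0"
  proof (rule DERIV_within_nonpos_imp_nonincreasing[OF \<open>0 \<le> t\<close>])
    fix s assume s: "s \<in> {0..t}"
    show "(\<psi> has_real_derivative (z' s - a * z s - b) * exp (- a * s)) (at s within {0..t})"
      unfolding \<psi>_def
      by (rule derivative_eq_intros deriv[OF s] refl | simp)+
        (use \<open>a > 0\<close> in \<open>simp add: field_simps\<close>)
    show "(z' s - a * z s - b) * exp (- a * s) \<le> 0"
      using le[OF s] by (simp add: mult_nonpos_nonneg)
  qed
  then have "(z t + b / a) * exp (- a * t) * exp (a * t) \<le> (z 0 + b / a) * exp (a * t)"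
    by (simp add: \<psi>_def mult_right_mono)
  then show ?thesis
    by (simp add: mult.assoc flip: exp_add)
qed

lemma has_real_derivative_norm_power2:
  fixes u :: "real \<Rightarrow> 'a::real_inner"
  assumes "(u has_vector_derivative u') (at t within S)"
  shows "((\<lambda>t. (norm (u t))\<^sup>2) has_real_derivative 2 * inner (u t) u') (at t within S)"
proof -
  have u: "(u has_derivative (\<lambda>s. s *\<^sub>R u')) (at t within S)"
    using assms unfolding has_vector_derivative_def .
  have "((\<lambda>t. inner (u t) (u t)) has_derivative
      (\<lambda>s. inner (u t) (s *\<^sub>R u') + inner (s *\<^sub>R u') (u t))) (at t within S)"
    by (rule has_derivative_inner[OF u u])
  then show ?thesis
    unfolding has_field_derivative_def power2_norm_eq_inner
    by (rule has_derivative_eq_rhs) (auto simp: fun_eq_iff inner_commute algebra_simps)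
qed

lemma compact_uniform_time_below:
  fixes h :: "'a::topological_space \<Rightarrow> real \<Rightarrow> real"
  assumes "compact S"
    and cont: "\<And>t. t \<ge> 0 \<Longrightarrow> continuous_on S (\<lambda>y. h y t)"
    and antimono: "\<And>y s t. y \<in> S \<Longrightarrow> 0 \<le> s \<Longrightarrow> s \<le> t \<Longrightarrow> h y t \<le> h y s"
    and below: "\<And>y. y \<in> S \<Longrightarrow> \<exists>t\<ge>0. h y t < \<epsilon>"
  obtains T where "T \<ge> 0" "\<And>y. y \<in> S \<Longrightarrow> h y T < \<epsilon>"
proof -
  have "\<exists>U. open U \<and> U \<inter> S = {y. h y t < \<epsilon>} \<inter> S" if t: "t \<ge> 0" for t
  proof -
    obtain U where "open U" "U \<inter> S = (\<lambda>y. h y t) -` {..<\<epsilon>} \<inter> S"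
      using cont[OF t] open_lessThan unfolding continuous_on_open_invariant by blast
    then show ?thesis by auto
  qed
  then obtain U where U: "\<And>t. t \<ge> 0 \<Longrightarrow> open (U t)"
    "\<And>t. t \<ge> 0 \<Longrightarrow> U t \<inter> S = {y. h y t < \<epsilon>} \<inter> S"
    by metis
  have "S \<subseteq> (\<Union>t\<in>{0..}. U t)"
    using below U(2) by fastforce
  then obtain C where C: "C \<subseteq> {0..}" "finite C" "S \<subseteq> (\<Union>t\<in>C. U t)"
    using compactE_image[OF \<open>compact S\<close>, of "{0..}" U] U(1) by auto
  define T where "T = Max (insert 0 C)"
  show thesis
  proof
    show "T \<ge> 0"
      using C(2) by (simp add: T_def)
    show "h y T < \<epsilon>" if "y \<in> S" for y
    proof -
      obtain t where "t \<in> C" "y \<in> U t"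
        using C(3) \<open>y \<in> S\<close> by blast
      with C U(2) \<open>y \<in> S\<close> have "h y t < \<epsilon>" "0 \<le> t" "t \<le> T"
        by (auto simp: T_def)
      then show ?thesis
        using antimono[OF \<open>y \<in> S\<close>] by (meson le_less_trans)
    qed
  qed
qed

lemma INF_loss_eq_0_imp_residual_less:
  fixes w :: "real \<Rightarrow> 'w"
  assumes "(INF t\<in>{0..}. loss Phi f (w t)) = 0" "\<epsilon> > 0"
  shows "\<exists>t\<ge>0. norm (f - Phi (w t)) < \<epsilon>"
proof -
  have bdd: "bdd_below ((\<lambda>t. loss Phi f (w t)) ` {0..})"
    by (rule bdd_belowI[of _ 0]) (auto simp: loss_def)
  have "(INF t\<in>{0..}. loss Phi f (w t)) < \<epsilon>\<^sup>2 / 2"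
    using assms by simp
  then have "\<exists>t\<in>{0..}. loss Phi f (w t) < \<epsilon>\<^sup>2 / 2"
    by (subst (asm) cINF_less_iff[OF _ bdd]) auto
  then obtain t where "t \<ge> 0" "loss Phi f (w t) < \<epsilon>\<^sup>2 / 2"
    by auto
  then have "(norm (f - Phi (w t)))\<^sup>2 < \<epsilon>\<^sup>2"
    by (simp add: loss_def)
  with \<open>t \<ge> 0\<close> \<open>\<epsilon> > 0\<close> show ?thesis
    using power2_less_imp_less by fastforce
qed

lemma norm_le_DIM_mult_bound:
  fixes x :: "'a::euclidean_space" and c :: real
  assumes "\<And>b. b \<in> Basis \<Longrightarrow> \<bar>x \<bullet> b\<bar> \<le> c"
  shows "norm x \<le> DIM('a) * c"
proof -
  have "norm x \<le> (\<Sum>b\<in>Basis. \<bar>x \<bullet> b\<bar>)"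
    by (rule norm_le_l1)
  also have "\<dots> \<le> DIM('a) * c"
    using sum_bounded_above[of Basis "\<lambda>b. \<bar>x \<bullet> b\<bar>" c] assms by simp
  finally show ?thesis .
qed

locale gradient_flow_model =
  fixes Phi :: "'w::euclidean_space \<Rightarrow> 'h::real_inner"
    and Phi' :: "'w \<Rightarrow> ('w \<Rightarrow>\<^sub>L 'h)"
  assumes has_derivative_Phi: "\<And>x. (Phi has_derivative blinfun_apply (Phi' x)) (at x)"
begin

lemma continuous_on_Phi: "continuous_on UNIV Phi"
  using has_derivative_Phi has_derivative_continuous continuous_at_imp_continuous_on by blast

definition descent_field :: "'h \<Rightarrow> 'w \<Rightarrow> 'w" where
  "descent_field f x = (\<Sum>b\<in>Basis. inner (f - Phi x) (Phi' x b) *\<^sub>R b)"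

lemma descent_field_inner_Basis:
  "b \<in> Basis \<Longrightarrow> descent_field f x \<bullet> b = inner (f - Phi x) (Phi' x b)"
  unfolding descent_field_def
  by (simp add: inner_sum_left inner_Basis if_distrib[of "\<lambda>u. _ * u"] sum.delta' cong: if_cong)

lemma has_derivative_loss:
  "(loss Phi f has_derivative (\<lambda>h. - inner (f - Phi x) (Phi' x h))) (at x)"
proof -
  have residual: "((\<lambda>x. f - Phi x) has_derivative (\<lambda>h. - Phi' x h)) (at x)"
    using has_derivative_diff[OF has_derivative_const has_derivative_Phi] by simp
  have "((\<lambda>x. (1/2) * inner (f - Phi x) (f - Phi x)) has_derivative
      (\<lambda>h. (1/2) * (inner (f - Phi x) (- Phi' x h) + inner (- Phi' x h) (f - Phi x)))) (at x)"
    by (intro has_derivative_mult_right has_derivative_inner residual)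
  then show ?thesis
    unfolding loss_def power2_norm_eq_inner
    by (rule has_derivative_eq_rhs) (simp add: fun_eq_iff inner_commute)
qed

lemma loss_gradient_eq:
  assumes "(loss Phi f has_derivative (\<lambda>h. gr \<bullet> h)) (at x)"
  shows "gr = - descent_field f x"
proof (rule euclidean_eqI)
  fix b :: 'w assume "b \<in> Basis"
  have "(\<lambda>h. gr \<bullet> h) = (\<lambda>h. - inner (f - Phi x) (Phi' x h))"
    using has_derivative_unique[OF assms has_derivative_loss] .
  then have "gr \<bullet> b = - inner (f - Phi x) (Phi' x b)"
    by (rule fun_cong)
  then show "gr \<bullet> b = - descent_field f x \<bullet> b"
    using \<open>b \<in> Basis\<close> by (simp add: descent_field_inner_Basis)
qed

lemma GF_solution_has_vector_derivative:
  assumes "is_GF_solution Phi f w" "t \<ge> 0"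
  shows "(w has_vector_derivative descent_field f (w t)) (at t within {0..})"
proof -
  obtain gr where grad: "(loss Phi f has_derivative (\<lambda>h. gr \<bullet> h)) (at (w t))"
    and "(w has_vector_derivative - gr) (at t within {0..})"
    using assms unfolding is_GF_solution_def by blast
  with loss_gradient_eq[OF grad] show ?thesis
    by simp
qed

lemma inner_residual_descent_field:
  "inner (f - Phi x) (Phi' x (descent_field f x)) = (norm (descent_field f x))\<^sup>2"
proof -
  let ?v = "descent_field f x"
  have "Phi' x ?v = Phi' x (\<Sum>b\<in>Basis. (?v \<bullet> b) *\<^sub>R b)"
    by (simp add: euclidean_representation)
  also have "\<dots> = (\<Sum>b\<in>Basis. (?v \<bullet> b) *\<^sub>R Phi' x b)"
    by (simp add: blinfun.sum_right blinfun.scaleR_right)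
  finally have "Phi' x ?v = (\<Sum>b\<in>Basis. (?v \<bullet> b) *\<^sub>R Phi' x b)" .
  then have "inner (f - Phi x) (Phi' x ?v) = (\<Sum>b\<in>Basis. (?v \<bullet> b) * (?v \<bullet> b))"
    by (simp add: inner_sum_right descent_field_inner_Basis)
  also have "\<dots> = (norm ?v)\<^sup>2"
    by (simp add: power2_norm_eq_inner euclidean_inner[of ?v ?v])
  finally show ?thesis .
qed

lemma GF_loss_has_real_derivative:
  assumes "is_GF_solution Phi f w" "t \<ge> 0"
  shows "((\<lambda>t. loss Phi f (w t)) has_real_derivative - (norm (descent_field f (w t)))\<^sup>2)
    (at t within {0..})"
proof -
  have "((\<lambda>t. loss Phi f (w t)) has_derivative
      (\<lambda>h. - inner (f - Phi (w t)) (Phi' (w t) (h *\<^sub>R descent_field f (w t))))) (at t within {0..})"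
    using diff_chain_within[OF GF_solution_has_vector_derivative[OF assms, unfolded has_vector_derivative_def]
        has_derivative_at_withinI[OF has_derivative_loss[of f]]]
    by (simp add: o_def)
  then show ?thesis
    unfolding has_field_derivative_def
    by (rule has_derivative_eq_rhs)
      (simp add: fun_eq_iff blinfun.scaleR_right inner_residual_descent_field)
qed

lemma GF_residual_antimono:
  assumes sol: "is_GF_solution Phi f w" and "0 \<le> s" "s \<le> t"
  shows "norm (f - Phi (w t)) \<le> norm (f - Phi (w s))"
proof -
  have "loss Phi f (w t) \<le> loss Phi f (w s)"
  proof (rule DERIV_within_nonpos_imp_nonincreasing[OF \<open>s \<le> t\<close>])
    fix x assume "x \<in> {s..t}"
    with \<open>0 \<le> s\<close> have "0 \<le> x" "{s..t} \<subseteq> {0..}"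
      by auto
    then show "((\<lambda>t. loss Phi f (w t)) has_real_derivative - (norm (descent_field f (w x)))\<^sup>2)
        (at x within {s..t})"
      by (intro DERIV_subset[OF GF_loss_has_real_derivative[OF sol]])
  qed simp
  then have "(norm (f - Phi (w t)))\<^sup>2 \<le> (norm (f - Phi (w s)))\<^sup>2"
    by (simp add: loss_def)
  then show ?thesis
    by (rule power2_le_imp_le) simp
qed

lemma norm_descent_field_le:
  "norm (descent_field f x) \<le> DIM('w) * (norm (f - Phi x) * norm (Phi' x))"
proof (rule norm_le_DIM_mult_bound)
  fix b :: 'w assume "b \<in> Basis"
  have "\<bar>inner (f - Phi x) (Phi' x b)\<bar> \<le> norm (f - Phi x) * norm (Phi' x b)"
    by (rule Cauchy_Schwarz_ineq2)
  also have "\<dots> \<le> norm (f - Phi x) * norm (Phi' x)"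
    using norm_blinfun[of "Phi' x" b] \<open>b \<in> Basis\<close> by (simp add: mult_left_mono)
  finally show "\<bar>descent_field f x \<bullet> b\<bar> \<le> norm (f - Phi x) * norm (Phi' x)"
    using \<open>b \<in> Basis\<close> by (simp add: descent_field_inner_Basis)
qed

end

locale lipschitz_gradient_flow_model = gradient_flow_model Phi Phi'
  for Phi :: "'w::euclidean_space \<Rightarrow> 'h::real_inner" and Phi' +
  fixes L :: real
  assumes lipschitz_Phi': "lipschitz_on L UNIV Phi'"
begin

lemma L_nonneg: "0 \<le> L"
  using lipschitz_on_nonneg[OF lipschitz_Phi'] .

lemma norm_Phi'_le: "norm (Phi' x) \<le> norm (Phi' 0) + L * norm x"
proof -
  have "norm (Phi' x - Phi' 0) \<le> L * norm x"
    using lipschitz_onD[OF lipschitz_Phi', of x 0] by (simp add: dist_norm)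
  then show ?thesis
    using norm_triangle_ineq2[of "Phi' x" "Phi' 0"] by linarith
qed

lemma norm_Phi_diff_le:
  assumes "norm x \<le> R" "norm y \<le> R"
  shows "norm (Phi x - Phi y) \<le> (norm (Phi' 0) + L * R) * norm (x - y)"
proof (rule differentiable_bound[of "cball 0 R"])
  show "(Phi has_derivative blinfun_apply (Phi' z)) (at z within cball 0 R)" for z
    using has_derivative_Phi has_derivative_at_withinI by blast
  show "onorm (blinfun_apply (Phi' z)) \<le> norm (Phi' 0) + L * R" if "z \<in> cball 0 R" for z
    using norm_Phi'_le[of z] that L_nonneg mult_left_mono[of "norm z" R L]
    by (simp add: norm_blinfun.rep_eq[symmetric])
qed (use assms in auto)

lemma GF_speed_le:
  assumes "is_GF_solution Phi f w" "0 \<le> t"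
  shows "norm (descent_field f (w t))
    \<le> DIM('w) * (norm (f - Phi 0) * (norm (Phi' 0) + L * norm (w t)))"
proof -
  have "norm (f - Phi (w t)) \<le> norm (f - Phi 0)"
    using GF_residual_antimono[OF assms(1) order_refl assms(2)] assms(1)
    by (simp add: is_GF_solution_def)
  then have "norm (f - Phi (w t)) * norm (Phi' (w t))
      \<le> norm (f - Phi 0) * (norm (Phi' 0) + L * norm (w t))"
    by (intro mult_mono norm_Phi'_le) auto
  then have "DIM('w) * (norm (f - Phi (w t)) * norm (Phi' (w t)))
      \<le> DIM('w) * (norm (f - Phi 0) * (norm (Phi' 0) + L * norm (w t)))"
    by (rule mult_left_mono) simp
  then show ?thesis
    using norm_descent_field_le[of f "w t"] by linarith
qed

lemma GF_solution_bounded: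
  assumes "0 \<le> T"
  obtains R where "0 \<le> R"
    "\<And>f w t. norm f \<le> M \<Longrightarrow> is_GF_solution Phi f w \<Longrightarrow> t \<in> {0..T} \<Longrightarrow> norm (w t) \<le> R"
proof
  define A where "A = DIM('w) * (\<bar>M\<bar> + norm (Phi 0)) * norm (Phi' 0)"
  define B where "B = DIM('w) * (\<bar>M\<bar> + norm (Phi 0)) * L"
  define a where "a = A + 2 * B + 1"
  have "0 \<le> A" "0 \<le> B"
    using L_nonneg by (auto simp: A_def B_def)
  then have "0 < a"
    by (simp add: a_def)
  show "0 \<le> sqrt (A / a * exp (a * T))"
    using \<open>0 \<le> A\<close> \<open>0 < a\<close> by simp
  fix f w t
  assume f: "norm f \<le> M" and sol: "is_GF_solution Phi f w" and t: "t \<in> {0..T}"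
  define z where "z = (\<lambda>s. (norm (w s))\<^sup>2)"
  have "z t + A / a \<le> (z 0 + A / a) * exp (a * t)"
  proof (rule Gronwall_inequality[OF \<open>0 < a\<close>])
    fix s assume s: "s \<in> {0..t}"
    show "(z has_real_derivative 2 * inner (w s) (descent_field f (w s))) (at s within {0..t})"
      unfolding z_def using s
      by (intro has_real_derivative_norm_power2 has_vector_derivative_within_subset
          [OF GF_solution_has_vector_derivative[OF sol]]) auto
    have "norm (f - Phi 0) \<le> \<bar>M\<bar> + norm (Phi 0)"
      using f norm_triangle_ineq4[of f "Phi 0"] by linarith
    then have "DIM('w) * (norm (f - Phi 0) * (norm (Phi' 0) + L * norm (w s)))
        \<le> DIM('w) * ((\<bar>M\<bar> + norm (Phi 0)) * (norm (Phi' 0) + L * norm (w s)))"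
      using L_nonneg by (intro mult_left_mono mult_right_mono) auto
    then have "norm (descent_field f (w s)) \<le> A + B * norm (w s)"
      using GF_speed_le[OF sol, of s] s by (simp add: A_def B_def algebra_simps)
    then have "norm (w s) * norm (descent_field f (w s)) \<le> norm (w s) * (A + B * norm (w s))"
      by (rule mult_left_mono) simp
    then have "2 * inner (w s) (descent_field f (w s)) \<le> 2 * norm (w s) * (A + B * norm (w s))"
      using norm_cauchy_schwarz[of "w s" "descent_field f (w s)"] by simp
    also have "\<dots> \<le> a * z s + A"
    proof -
      have "2 * norm (w s) \<le> (norm (w s))\<^sup>2 + 1"
        using sum_squares_bound[of "norm (w s)" 1] by (simp add: power2_eq_square)
      then have "A * (2 * norm (w s)) \<le> A * ((norm (w s))\<^sup>2 + 1)"
        using \<open>0 \<le> A\<close> by (rule mult_left_mono)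
      moreover have "2 * norm (w s) * (A + B * norm (w s))
          = A * (2 * norm (w s)) + 2 * B * (norm (w s))\<^sup>2"
        by (simp add: algebra_simps power2_eq_square)
      moreover have "a * z s + A = A * ((norm (w s))\<^sup>2 + 1) + 2 * B * (norm (w s))\<^sup>2 + (norm (w s))\<^sup>2"
        by (simp add: a_def z_def algebra_simps)
      ultimately show ?thesis
        using zero_le_power2[of "norm (w s)"] by linarith
    qed
    finally show "2 * inner (w s) (descent_field f (w s)) \<le> a * z s + A" .
  qed (use t in auto)
  moreover have "z 0 = 0"
    using sol by (simp add: z_def is_GF_solution_def)
  moreover have "A / a * exp (a * t) \<le> A / a * exp (a * T)"
    using t \<open>0 \<le> A\<close> \<open>0 < a\<close> by (intro mult_left_mono) auto
  moreover have "0 \<le> A / a"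
    using \<open>0 \<le> A\<close> \<open>0 < a\<close> by simp
  ultimately have "z t \<le> A / a * exp (a * T)"
    by simp
  then show "norm (w t) \<le> sqrt (A / a * exp (a * T))"
    by (simp add: z_def real_le_rsqrt)
qed

lemma descent_field_lipschitz_on_bounded:
  assumes "0 \<le> R"
  obtains K where "0 < K"
    "\<And>f f' x y. norm f' \<le> M \<Longrightarrow> norm x \<le> R \<Longrightarrow> norm y \<le> R \<Longrightarrow>
       norm (descent_field f x - descent_field f' y) \<le> K * (norm (f - f') + norm (x - y))"
proof -
  define D where "D = norm (Phi' 0) + L * R"
  define P where "P = \<bar>M\<bar> + norm (Phi 0) + D * R"
  define K0 where "K0 = D * D + D + P * L"
  have "0 \<le> D" "0 \<le> P"
    using \<open>0 \<le> R\<close> L_nonneg by (auto simp: D_def P_def)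
  then have "0 \<le> K0"
    using L_nonneg by (simp add: K0_def)
  have "norm (descent_field f x - descent_field f' y) \<le> (DIM('w) * K0 + 1) * (norm (f - f') + norm (x - y))"
    if f': "norm f' \<le> M" and x: "norm x \<le> R" and y: "norm y \<le> R" for f f' x y
  proof -
    let ?\<delta> = "norm (f - f') + norm (x - y)"
    have "norm (descent_field f x - descent_field f' y) \<le> DIM('w) * (K0 * ?\<delta>)"
    proof (rule norm_le_DIM_mult_bound)
      fix b :: 'w assume b: "b \<in> Basis"
      have "(descent_field f x - descent_field f' y) \<bullet> b
          = inner ((f - f') - (Phi x - Phi y)) (Phi' x b) + inner (f' - Phi y) ((Phi' x - Phi' y) b)"
        using b by (simp add: descent_field_inner_Basis inner_diff_left inner_diff_right blinfun.diff_left)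
      moreover have "\<bar>inner ((f - f') - (Phi x - Phi y)) (Phi' x b)\<bar> \<le> (norm (f - f') + D * norm (x - y)) * D"
      proof -
        have "norm ((f - f') - (Phi x - Phi y)) \<le> norm (f - f') + D * norm (x - y)"
          using norm_triangle_ineq4[of "f - f'" "Phi x - Phi y"] norm_Phi_diff_le[OF x y]
          by (simp add: D_def)
        moreover have "norm (Phi' x b) \<le> D"
          using norm_blinfun[of "Phi' x" b] b norm_Phi'_le[of x] x L_nonneg
            mult_left_mono[of "norm x" R L] by (simp add: D_def)
        ultimately show ?thesis
          by (rule order_trans[OF Cauchy_Schwarz_ineq2 mult_mono]) (use \<open>0 \<le> D\<close> in auto)
      qed
      moreover have "\<bar>inner (f' - Phi y) ((Phi' x - Phi' y) b)\<bar> \<le> P * (L * norm (x - y))"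
      proof -
        have "norm (Phi y - Phi 0) \<le> D * norm y"
          using norm_Phi_diff_le[OF y, of 0] \<open>0 \<le> R\<close> by (simp add: D_def)
        then have "norm (Phi y) \<le> norm (Phi 0) + D * R"
          using \<open>0 \<le> D\<close> y norm_triangle_ineq2[of "Phi y" "Phi 0"] mult_left_mono[of "norm y" R D]
          by linarith
        then have "norm (f' - Phi y) \<le> P"
          using f' norm_triangle_ineq4[of f' "Phi y"] by (simp add: P_def)
        moreover have "norm ((Phi' x - Phi' y) b) \<le> L * norm (x - y)"
          using norm_blinfun[of "Phi' x - Phi' y" b] b lipschitz_onD[OF lipschitz_Phi', of x y]
          by (simp add: dist_norm)
        ultimately show ?thesis
          by (rule order_trans[OF Cauchy_Schwarz_ineq2 mult_mono]) (use \<open>0 \<le> P\<close> in auto)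
      qed
      moreover have "(norm (f - f') + D * norm (x - y)) * D + P * (L * norm (x - y)) \<le> K0 * ?\<delta>"
        using \<open>0 \<le> D\<close> \<open>0 \<le> P\<close> L_nonneg
        by (simp add: K0_def algebra_simps)
      ultimately show "\<bar>(descent_field f x - descent_field f' y) \<bullet> b\<bar> \<le> K0 * ?\<delta>"
        by linarith
    qed
    also have "\<dots> \<le> (DIM('w) * K0 + 1) * ?\<delta>"
      by (simp add: algebra_simps)
    finally show ?thesis .
  qed
  moreover have "0 < DIM('w) * K0 + 1"
    using \<open>0 \<le> K0\<close> by (simp add: add_nonneg_pos)
  ultimately show thesis
    using that by blast
qed

lemma GF_solution_lipschitz_in_target:
  assumes "0 \<le> T"
  obtains C where "0 \<le> C"
    "\<And>f f' u v t. norm f \<le> M \<Longrightarrow> norm f' \<le> M \<Longrightarrow> is_GF_solution Phi f u \<Longrightarrow>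
       is_GF_solution Phi f' v \<Longrightarrow> t \<in> {0..T} \<Longrightarrow> norm (u t - v t) \<le> C * norm (f - f')"
proof -
  obtain R where "0 \<le> R" and bounded:
    "\<And>f w t. norm f \<le> M \<Longrightarrow> is_GF_solution Phi f w \<Longrightarrow> t \<in> {0..T} \<Longrightarrow> norm (w t) \<le> R"
    using GF_solution_bounded[OF assms] by blast
  obtain K where "0 < K" and lipschitz:
    "\<And>f f' x y. norm f' \<le> M \<Longrightarrow> norm x \<le> R \<Longrightarrow> norm y \<le> R \<Longrightarrow>
       norm (descent_field f x - descent_field f' y) \<le> K * (norm (f - f') + norm (x - y))"
    using descent_field_lipschitz_on_bounded[OF \<open>0 \<le> R\<close>] by blast
  have "norm (u t - v t) \<le> sqrt (exp (3 * K * T)) * norm (f - f')"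
    if f: "norm f \<le> M" and f': "norm f' \<le> M" and u: "is_GF_solution Phi f u"
      and v: "is_GF_solution Phi f' v" and t: "t \<in> {0..T}" for f f' u v t
  proof -
    define \<delta> where "\<delta> = norm (f - f')"
    define z where "z = (\<lambda>s. (norm (u s - v s))\<^sup>2)"
    have "z t + K * \<delta>\<^sup>2 / (3 * K) \<le> (z 0 + K * \<delta>\<^sup>2 / (3 * K)) * exp (3 * K * t)"
    proof (rule Gronwall_inequality)
      fix s assume s: "s \<in> {0..t}"
      let ?V = "descent_field f (u s) - descent_field f' (v s)"
      show "(z has_real_derivative 2 * inner (u s - v s) ?V) (at s within {0..t})"
        unfolding z_def using s
        by (intro has_real_derivative_norm_power2 has_vector_derivative_within_subset
            [OF has_vector_derivative_diff[OF GF_solution_has_vector_derivative[OF u]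
                GF_solution_has_vector_derivative[OF v]]]) auto
      define n where "n = norm (u s - v s)"
      have "norm ?V \<le> K * (\<delta> + n)"
        unfolding \<delta>_def n_def using s t by (intro lipschitz f' bounded[OF f u] bounded[OF f' v]) auto
      then have "n * norm ?V \<le> n * (K * (\<delta> + n))"
        by (rule mult_left_mono) (simp add: n_def)
      then have "2 * inner (u s - v s) ?V \<le> 2 * n * (K * (\<delta> + n))"
        using norm_cauchy_schwarz[of "u s - v s" ?V] by (simp add: n_def)
      also have "\<dots> \<le> 3 * K * z s + K * \<delta>\<^sup>2"
      proof -
        have "2 * \<delta> * n \<le> \<delta>\<^sup>2 + n\<^sup>2"
          using sum_squares_bound[of \<delta> n] by (simp add: power2_eq_square)
        then have "K * (2 * \<delta> * n) \<le> K * (\<delta>\<^sup>2 + n\<^sup>2)"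
          using \<open>0 < K\<close> by simp
        then show ?thesis
          by (simp add: z_def n_def algebra_simps power2_eq_square)
      qed
      finally show "2 * inner (u s - v s) ?V \<le> 3 * K * z s + K * \<delta>\<^sup>2" .
    qed (use \<open>0 < K\<close> t in auto)
    moreover have "z 0 = 0"
      using u v by (simp add: z_def is_GF_solution_def)
    moreover have "K * \<delta>\<^sup>2 / (3 * K) = \<delta>\<^sup>2 / 3"
      using \<open>0 < K\<close> by simp
    ultimately have "z t + \<delta>\<^sup>2 / 3 \<le> \<delta>\<^sup>2 / 3 * exp (3 * K * t)"
      by simp
    moreover have "\<delta>\<^sup>2 / 3 * exp (3 * K * t) \<le> \<delta>\<^sup>2 * exp (3 * K * T)"
      using t \<open>0 < K\<close> by (intro mult_mono) auto
    ultimately have "(norm (u t - v t))\<^sup>2 \<le> \<delta>\<^sup>2 * exp (3 * K * T)"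
      using zero_le_power2[of \<delta>] unfolding z_def by linarith
    then have "norm (u t - v t) \<le> sqrt (\<delta>\<^sup>2 * exp (3 * K * T))"
      by (rule real_le_rsqrt)
    then show ?thesis
      by (simp add: \<delta>_def real_sqrt_mult mult.commute)
  qed
  then show thesis
    using that[of "sqrt (exp (3 * K * T))"] by simp
qed

lemma compact_learnable_near_continuous_factor:
  assumes "compact K" "K \<subseteq> F_learnable Phi" "\<epsilon> > 0"
  obtains k where "continuous_on K k" "\<And>f. f \<in> K \<Longrightarrow> dist (Phi (k f)) f < \<epsilon>"
proof -
  define sol where
    "sol f = (SOME w. is_GF_solution Phi f w \<and> (INF t\<in>{0..}. loss Phi f (w t)) = 0)" for f
  have sol: "is_GF_solution Phi f (sol f)" "(INF t\<in>{0..}. loss Phi f (sol f t)) = 0"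
    if "f \<in> K" for f
    using someI_ex[of "\<lambda>w. is_GF_solution Phi f w \<and> (INF t\<in>{0..}. loss Phi f (w t)) = 0"]
      that assms(2) unfolding sol_def F_learnable_def by blast+
  obtain M where M: "\<And>f. f \<in> K \<Longrightarrow> norm f \<le> M"
    using compact_imp_bounded[OF \<open>compact K\<close>] by (auto simp: bounded_iff)
  have continuous_sol: "continuous_on K (\<lambda>f. sol f t)" if "0 \<le> t" for t
  proof -
    obtain C where "0 \<le> C" and C:
      "\<And>f f' u v s. norm f \<le> M \<Longrightarrow> norm f' \<le> M \<Longrightarrow> is_GF_solution Phi f u \<Longrightarrow>
         is_GF_solution Phi f' v \<Longrightarrow> s \<in> {0..t} \<Longrightarrow> norm (u s - v s) \<le> C * norm (f - f')"
      using GF_solution_lipschitz_in_target[OF \<open>0 \<le> t\<close>] by blast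
    have "C-lipschitz_on K (\<lambda>f. sol f t)"
      using \<open>0 \<le> C\<close> \<open>0 \<le> t\<close> by (intro lipschitz_onI) (simp_all add: dist_norm C M sol)
    then show ?thesis
      by (rule lipschitz_on_continuous_on)
  qed
  obtain T where "T \<ge> 0" and T: "\<And>f. f \<in> K \<Longrightarrow> norm (f - Phi (sol f T)) < \<epsilon>"
  proof (rule compact_uniform_time_below[OF \<open>compact K\<close>])
    show "continuous_on K (\<lambda>f. norm (f - Phi (sol f t)))" if "0 \<le> t" for t
      using continuous_sol[OF that] continuous_on_Phi
      by (intro continuous_intros) (auto intro: continuous_on_compose2)
    show "norm (f - Phi (sol f t)) \<le> norm (f - Phi (sol f s))" if "f \<in> K" "0 \<le> s" "s \<le> t" for f s t
      using GF_residual_antimono[OF sol(1)] that by blast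
    show "\<exists>t\<ge>0. norm (f - Phi (sol f t)) < \<epsilon>" if "f \<in> K" for f
      using INF_loss_eq_0_imp_residual_less[OF sol(2)[OF that] \<open>\<epsilon> > 0\<close>] .
  qed blast
  show thesis
  proof
    show "continuous_on K (\<lambda>f. sol f T)"
      using continuous_sol[OF \<open>T \<ge> 0\<close>] .
    show "dist (Phi (sol f T)) f < \<epsilon>" if "f \<in> K" for f
      using T[OF that] by (simp add: dist_norm norm_minus_commute)
  qed
qed

end

theorem theorem3:
  fixes Phi :: "'w::euclidean_space \<Rightarrow> 'h::{real_inner, complete_space}"
    and Phi' :: "'w \<Rightarrow> ('w \<Rightarrow>\<^sub>L 'h)"
    and g :: "'w \<times> real \<Rightarrow> 'h"
    and L :: real
  assumes deriv: "\<And>x. (Phi has_derivative blinfun_apply (Phi' x)) (at x)"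
    and lip: "lipschitz_on L UNIV Phi'"
    and cont: "continuous_on (sphere 0 1) g"
    and inj: "inj_on g (sphere 0 1)"
  shows "\<not> (g ` sphere 0 1 \<subseteq> F_learnable Phi)"
proof
  assume learnable: "g ` sphere 0 1 \<subseteq> F_learnable Phi"
  interpret lipschitz_gradient_flow_model Phi Phi' L
    by unfold_locales (fact deriv lip)+
  have "DIM('w) < DIM('w \<times> real)"
    by simp
  then obtain \<epsilon> where "\<epsilon> > 0" and far: "\<And>k. continuous_on (g ` sphere 0 1) k \<Longrightarrow>
      \<exists>f\<in>g ` sphere 0 1. \<epsilon> \<le> dist (Phi (k f)) f"
    using sphere_embedding_not_near_lowdim_factor[OF _ cont inj continuous_on_Phi] by blast
  obtain k where "continuous_on (g ` sphere 0 1) k"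
    and near: "\<And>f. f \<in> g ` sphere 0 1 \<Longrightarrow> dist (Phi (k f)) f < \<epsilon>"
    using compact_learnable_near_continuous_factor
      [OF compact_continuous_image[OF cont compact_sphere] learnable \<open>\<epsilon> > 0\<close>] by blast
  with far show False
    by (meson not_le)
qed

end
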